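(* Fix a cutoff $C>0$ and pool size $K\ge2$. Let $(V_1,S_1),\dots,(V_K,S_K)$ be i.i.d. pairs, where $V_j\ge0$ is the true quantitative test result and $S_j$ is a risk score satisfying the risk-score condition below. Let $T_j=\sum_{l=j}^K V_l$ with distribution function $\mathbf F_{T_j}$, let $V_{[1]},\dots,V_{[K]}$ be the $V_j$ listed in decreasing order of $S_j$, and $T_{[j]}=\sum_{l=j}^K V_{[l]}$. Define the testing efficiencies (expected number of assays per individual) \[ \phi_{\mathrm{IND}}=1,\quad \phi_{\mathrm{MP}}=\frac1K+\Pr(T_1>C),\quad \phi_{\mathrm{MPA}}=1-\frac1K\sum_{j=1}^{K-1}\mathbf F_{T_j}(C),\quad \phi_{\mathrm{mMPA}}=1-\frac1K\sum_{j=1}^{K-1}\Pr(T_{[j]}\le C). \] Then $\phi_{\mathrm{mMPA}}\le\phi_{\mathrm{MPA}}\le\min(\phi_{\mathrm{MP}},\phi_{\mathrm{IND}})$.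
   Context: For random variables $X,Y$, $X\succeq Y$ means $\Pr(X>v)\ge\Pr(Y>v)$ for all $v\ge0$. A risk score satisfies the risk-score condition if $S_j\ge S_{j'}$ implies $V_j\succeq V_{j'}$. Procedures (failure means $V>C$; the pool is positive iff $T_1=\sum_jV_j>C$, i.e. $V_{\mathrm{pool}}>C/K$): IND tests every individual. MP tests the pool and, if positive, all $K$ individuals. MPA, after a positive pool, tests individuals sequentially in a random order, updating $T_{j+1}=T_j-V_j$, and stops as soon as $T_{j+1}\le C$, declaring the remaining negative (using $1+\sum_{j=1}^{K-1}\mathbf 1(T_j>C)$ assays). mMPA is the same as MPA but tests individuals in decreasing order of risk score (using $1+\sum_{j=1}^{K-1}\mathbf 1(T_{[j]}>C)$ assays). *)

theory Defs
  imports "HOL-Probability.Probability"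
begin

definition Tsum :: "nat \<Rightarrow> (nat \<Rightarrow> 'a \<Rightarrow> real) \<Rightarrow> nat \<Rightarrow> 'a \<Rightarrow> real" where
  "Tsum K V j \<omega> = (\<Sum>l = j..K. V l \<omega>)"

text \<open>Position of individual l in the list sorted by decreasing risk score
  (ties broken by index).\<close>
definition score_rank :: "nat \<Rightarrow> (nat \<Rightarrow> 'a \<Rightarrow> real) \<Rightarrow> nat \<Rightarrow> 'a \<Rightarrow> nat" where
  "score_rank K S l \<omega> =
     card {m \<in> {1..K}. S m \<omega> > S l \<omega> \<or> (S m \<omega> = S l \<omega> \<and> m < l)} + 1"

text \<open>T_[j] = sum of V_[l] for l >= j, where V_[i] is the V of the individual at position i.\<close>
definition Tord :: "nat \<Rightarrow> (nat \<Rightarrow> 'a \<Rightarrow> real) \<Rightarrow> (nat \<Rightarrow> 'a \<Rightarrow> real) \<Rightarrow> nat \<Rightarrow> 'a \<Rightarrow> real" where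
  "Tord K V S j \<omega> = (\<Sum>l \<in> {l \<in> {1..K}. j \<le> score_rank K S l \<omega>}. V l \<omega>)"

definition phi_IND :: real where "phi_IND = 1"

definition phi_MP :: "'a measure \<Rightarrow> nat \<Rightarrow> (nat \<Rightarrow> 'a \<Rightarrow> real) \<Rightarrow> real \<Rightarrow> real" where
  "phi_MP M K V C = 1 / real K + measure M {\<omega> \<in> space M. Tsum K V 1 \<omega> > C}"

definition phi_MPA :: "'a measure \<Rightarrow> nat \<Rightarrow> (nat \<Rightarrow> 'a \<Rightarrow> real) \<Rightarrow> real \<Rightarrow> real" where
  "phi_MPA M K V C =
     1 - (1 / real K) * (\<Sum>j = 1..K - 1. cdf (distr M borel (Tsum K V j)) C)"

definition phi_mMPA :: "'a measure \<Rightarrow> nat \<Rightarrow> (nat \<Rightarrow> 'a \<Rightarrow> real) \<Rightarrow> (nat \<Rightarrow> 'a \<Rightarrow> real) \<Rightarrow> real \<Rightarrow> real" where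
  "phi_mMPA M K V S C =
     1 - (1 / real K) * (\<Sum>j = 1..K - 1. measure M {\<omega> \<in> space M. Tord K V S j \<omega> \<le> C})"

text \<open>Risk-score condition: the conditional survival function of V_j given S_j = s,
  g v s = Pr(V_j > v | S_j = s), can be chosen nondecreasing in s for every v >= 0.\<close>
definition risk_score_condition ::
  "'a measure \<Rightarrow> nat \<Rightarrow> (nat \<Rightarrow> 'a \<Rightarrow> real) \<Rightarrow> (nat \<Rightarrow> 'a \<Rightarrow> real) \<Rightarrow> bool" where
  "risk_score_condition M K V S \<longleftrightarrow>
    (\<exists>g :: real \<Rightarrow> real \<Rightarrow> real.
      (\<forall>v \<ge> 0. mono (g v) \<and> g v \<in> borel_measurable borel) \<and>
      (\<forall>j \<in> {1..K}. \<forall>v \<ge> 0.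
         integrable M (\<lambda>\<omega>. g v (S j \<omega>)) \<and>
         (\<forall>A \<in> sets borel.
            measure M {\<omega> \<in> space M. V j \<omega> > v \<and> S j \<omega> \<in> A}
            = (\<integral>\<omega>. indicator A (S j \<omega>) * g v (S j \<omega>) \<partial>M))))"

end

(*
  Two of the inequalities are elementary: phi_MPA <= phi_IND because distribution functions are
  nonnegative, and phi_MPA <= phi_MP because T_j <= T_1.

  For phi_mMPA <= phi_MPA one shows Pr(T_[j] > C) <= Pr(T_j > C). Here T_[j] sums the values of
  the K-j+1 individuals with the lowest scores, and T_j those of a fixed set L of the same size.
  Split the sample space according to which set D these lowest-scored individuals form; each of
  these events depends on the scores only. On the event for D, exchange the members of D - L one at a time
  against members of L - D: each exchange replaces an individual by one with a higher score, and
  by the risk-score condition a higher score makes the value stochastically larger. With all other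
  individuals frozen, a single exchange compares Pr(V > w, (S, S') in H) with Pr(V' > w, (S, S') in H)
  for two i.i.d. pairs (V, S), (V', S') and a set H of scores on which S' <= S; conditioning on the
  scores turns these into E[1_H G(w, S)] >= E[1_H G(w, S')] for the nondecreasing conditional
  survival function G.
*)

theory Submission
  imports Defs
begin

section \<open>Ranking by decreasing score\<close>

definition ranks_before :: "('i \<Rightarrow> 's::linorder) \<Rightarrow> 'i::linorder \<Rightarrow> 'i \<Rightarrow> bool" where
  "ranks_before s m l \<longleftrightarrow> s l < s m \<or> (s m = s l \<and> m < l)"

definition rank_desc :: "'i::linorder set \<Rightarrow> ('i \<Rightarrow> 's::linorder) \<Rightarrow> 'i \<Rightarrow> nat" where
  "rank_desc I s l = card {m \<in> I. ranks_before s m l} + 1"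

definition lower_ranked :: "'i::linorder set \<Rightarrow> ('i \<Rightarrow> 's::linorder) \<Rightarrow> nat \<Rightarrow> 'i set" where
  "lower_ranked I s j = {l \<in> I. j \<le> rank_desc I s l}"

lemma score_rank_eq_rank_desc: "score_rank K S l \<omega> = rank_desc {1..K} (\<lambda>m. S m \<omega>) l"
  by (simp add: score_rank_def rank_desc_def ranks_before_def)

lemma Tord_eq_sum_lower_ranked:
  "Tord K V S j \<omega> = (\<Sum>l\<in>lower_ranked {1..K} (\<lambda>m. S m \<omega>) j. V l \<omega>)"
  by (simp add: Tord_def lower_ranked_def score_rank_eq_rank_desc)

lemma rank_desc_cong:
  assumes "\<And>m. m \<in> I \<Longrightarrow> s m = s' m" and "l \<in> I"
  shows "rank_desc I s l = rank_desc I s' l"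
proof -
  have "{m \<in> I. ranks_before s m l} = {m \<in> I. ranks_before s' m l}"
    using assms by (auto simp: ranks_before_def)
  then show ?thesis
    by (simp add: rank_desc_def)
qed

lemma lower_ranked_cong:
  assumes "\<And>m. m \<in> I \<Longrightarrow> s m = s' m"
  shows "lower_ranked I s j = lower_ranked I s' j"
proof -
  have "rank_desc I s l = rank_desc I s' l" if "l \<in> I" for l
    using assms that by (rule rank_desc_cong)
  then show ?thesis
    by (auto simp: lower_ranked_def)
qed

lemma lower_ranked_subset: "lower_ranked I s j \<subseteq> I"
  by (auto simp: lower_ranked_def)

lemma ranks_before_trans: "ranks_before s m d \<Longrightarrow> ranks_before s d l \<Longrightarrow> ranks_before s m l"
  by (auto simp: ranks_before_def)

lemma ranks_before_irrefl: "\<not> ranks_before s l l"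
  by (simp add: ranks_before_def)

lemma ranks_before_total: "m \<noteq> l \<Longrightarrow> ranks_before s m l \<or> ranks_before s l m"
  by (auto simp: ranks_before_def neq_iff)

lemma rank_desc_less:
  assumes "finite I" and "d \<in> I" and "ranks_before s d l"
  shows "rank_desc I s d < rank_desc I s l"
proof -
  have "{m \<in> I. ranks_before s m d} \<subseteq> {m \<in> I. ranks_before s m l}"
    using assms(3) by (auto intro: ranks_before_trans)
  moreover have "d \<in> {m \<in> I. ranks_before s m l}" "d \<notin> {m \<in> I. ranks_before s m d}"
    using assms(2,3) by (auto simp: ranks_before_irrefl)
  ultimately have "card {m \<in> I. ranks_before s m d} < card {m \<in> I. ranks_before s m l}"
    using assms(1) by (intro psubset_card_mono) auto
  then show ?thesis
    by (simp add: rank_desc_def)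
qed

lemma rank_desc_less_imp_score_le:
  assumes "finite I" and "d \<in> I" and "rank_desc I s l < rank_desc I s d"
  shows "s d \<le> s l"
  using rank_desc_less[OF assms(1,2), of s l] assms(3) by (force simp: ranks_before_def)

lemma inj_on_rank_desc:
  assumes "finite I"
  shows "inj_on (rank_desc I s) I"
proof (rule inj_onI)
  fix l d assume "l \<in> I" "d \<in> I" "rank_desc I s l = rank_desc I s d"
  then show "l = d"
    using rank_desc_less[OF assms, of l s d] rank_desc_less[OF assms, of d s l]
      ranks_before_total[of l d s] by fastforce
qed

lemma rank_desc_image:
  assumes "finite I"
  shows "rank_desc I s ` I = {1..card I}"
proof -
  have "rank_desc I s l \<le> card I" if "l \<in> I" for l
  proof -
    have "card {m \<in> I. ranks_before s m l} \<le> card (I - {l})"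
      using assms by (intro card_mono) (auto simp: ranks_before_irrefl)
    moreover have "card (I - {l}) = card I - 1" and "card I > 0"
      using that assms by (auto simp: card_gt_0_iff)
    ultimately show ?thesis
      by (simp add: rank_desc_def)
  qed
  then have "rank_desc I s ` I \<subseteq> {1..card I}"
    by (auto simp: rank_desc_def)
  moreover have "card (rank_desc I s ` I) = card {1..card I}"
    using assms by (simp add: card_image inj_on_rank_desc)
  ultimately show ?thesis
    by (intro card_subset_eq) auto
qed

lemma card_lower_ranked:
  assumes "finite I" and "1 \<le> j"
  shows "card (lower_ranked I s j) = card {j..card I}"
proof -
  have "rank_desc I s ` lower_ranked I s j = rank_desc I s ` I \<inter> {j..}"
    by (auto simp: lower_ranked_def)
  also have "\<dots> = {j..card I}"
    using rank_desc_image[OF assms(1), of s] assms(2) by auto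
  finally have "rank_desc I s ` lower_ranked I s j = {j..card I}" .
  moreover have "inj_on (rank_desc I s) (lower_ranked I s j)"
    using inj_on_rank_desc[OF assms(1)] by (rule inj_on_subset) (auto simp: lower_ranked_def)
  ultimately show ?thesis
    by (metis card_image)
qed

lemma measurable_rank_desc:
  fixes I :: "nat set" and f :: "nat \<Rightarrow> 'a \<Rightarrow> real"
  assumes f: "\<And>m. m \<in> I \<Longrightarrow> f m \<in> borel_measurable N" and l: "l \<in> I"
  shows "(\<lambda>x. rank_desc I (\<lambda>m. f m x) l) \<in> measurable N (count_space UNIV)"
proof -
  have "{x \<in> space N. m \<in> {m \<in> I. ranks_before (\<lambda>m. f m x) m l}} \<in> sets N" for m
  proof (cases "m \<in> I")
    case True
    then have "{x \<in> space N. m \<in> {m \<in> I. ranks_before (\<lambda>m. f m x) m l}}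
        = {x \<in> space N. f l x < f m x \<or> (f m x = f l x \<and> m < l)}"
      by (auto simp: ranks_before_def)
    also have "\<dots> \<in> sets N"
      using f[OF True] f[OF l]
      by (intro sets.sets_Collect_disj sets.sets_Collect_conj sets.sets_Collect_const
          borel_measurable_less borel_measurable_eq)
    finally show ?thesis .
  qed simp
  then have "(\<lambda>x. card {m \<in> I. ranks_before (\<lambda>m. f m x) m l}) \<in> measurable N (count_space UNIV)"
    by (rule measurable_card)
  then show ?thesis
    unfolding rank_desc_def by (rule measurable_compose) simp
qed

lemma sets_lower_ranked_eq:
  fixes I :: "nat set" and f :: "nat \<Rightarrow> 'a \<Rightarrow> real"
  assumes f: "\<And>m. m \<in> I \<Longrightarrow> f m \<in> borel_measurable N" and D: "D \<subseteq> I"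
  shows "{x \<in> space N. lower_ranked I (\<lambda>m. f m x) j = D} \<in> sets N"
proof -
  have "{x \<in> space N. lower_ranked I (\<lambda>m. f m x) j = D}
      = {x \<in> space N. \<forall>l\<in>I. l \<in> D \<longleftrightarrow> j \<le> rank_desc I (\<lambda>m. f m x) l}"
    using D by (auto simp: lower_ranked_def)
  also have "\<dots> \<in> sets N"
    unfolding pred_def[symmetric]
  proof (rule pred_intros_countable_bounded(3))
    fix l assume "l \<in> I"
    with f have "(\<lambda>x. rank_desc I (\<lambda>m. f m x) l) \<in> measurable N (count_space UNIV)"
      by (rule measurable_rank_desc)
    then show "Measurable.pred N (\<lambda>x. l \<in> D \<longleftrightarrow> j \<le> rank_desc I (\<lambda>m. f m x) l)"
      by (rule measurable_compose) simp
  qed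
  finally show ?thesis .
qed

lemma sets_lower_ranked_sum_gt:
  fixes I :: "nat set" and s v :: "nat \<Rightarrow> 'a \<Rightarrow> real"
  assumes I: "finite I"
    and s: "\<And>m. m \<in> I \<Longrightarrow> s m \<in> borel_measurable N"
    and v: "\<And>m. m \<in> I \<Longrightarrow> v m \<in> borel_measurable N"
  shows "{x \<in> space N. c < (\<Sum>l\<in>lower_ranked I (\<lambda>m. s m x) j. v l x)} \<in> sets N"
proof -
  have "{x \<in> space N. c < (\<Sum>l\<in>lower_ranked I (\<lambda>m. s m x) j. v l x)}
    = (\<Union>D\<in>Pow I. {x \<in> space N. lower_ranked I (\<lambda>m. s m x) j = D} \<inter> {x \<in> space N. c < (\<Sum>l\<in>D. v l x)})"
    using lower_ranked_subset[of I] by blast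
  also have "\<dots> \<in> sets N"
  proof (intro sets.finite_UN sets.Int)
    fix D assume "D \<in> Pow I"
    then have "(\<lambda>x. \<Sum>l\<in>D. v l x) \<in> borel_measurable N"
      using v by (intro borel_measurable_sum) auto
    then show "{x \<in> space N. c < (\<Sum>l\<in>D. v l x)} \<in> sets N"
      by measurable
    show "{x \<in> space N. lower_ranked I (\<lambda>m. s m x) j = D} \<in> sets N"
      using s \<open>D \<in> Pow I\<close> by (intro sets_lower_ranked_eq) auto
  qed (use I in auto)
  finally show ?thesis .
qed

section \<open>Laws of value--score pairs satisfying the risk-score condition\<close>

text \<open>\<open>\<mu>\<close> is the joint law of (value, score), and \<open>G w\<close> is a version of the conditional
  survival function \<open>s \<mapsto> Pr(value > w | score = s)\<close>, nondecreasing in the score.\<close>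

locale risk_score_law =
  fixes \<mu> :: "(real \<times> real) measure" and G :: "real \<Rightarrow> real \<Rightarrow> real"
  assumes prob_space: "prob_space \<mu>"
    and sets_eq: "sets \<mu> = sets (borel \<Otimes>\<^sub>M borel)"
    and mono_G: "mono (G w)"
    and G_measurable: "G w \<in> borel_measurable borel"
    and integrable_G: "integrable \<mu> (\<lambda>y. G w (snd y))"
    and survival_eq: "A \<in> sets borel \<Longrightarrow>
      measure \<mu> {y \<in> space \<mu>. w < fst y \<and> snd y \<in> A} = (\<integral>y. indicator A (snd y) * G w (snd y) \<partial>\<mu>)"

sublocale risk_score_law \<subseteq> prob_space \<mu>
  by (rule prob_space)

context risk_score_law
begin

lemmas [measurable_cong] = sets_eq
lemmas [measurable] = G_measurable

lemma space_eq [simp]: "space \<mu> = UNIV"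
  using sets_eq_imp_space_eq[OF sets_eq] by (simp add: space_pair_measure)

lemma survival_eq_score_determined:
  assumes B: "B \<in> sets \<mu>" and det: "\<And>y y'. snd y = snd y' \<Longrightarrow> y \<in> B \<Longrightarrow> y' \<in> B"
  shows "measure \<mu> {y \<in> B. w < fst y} = (\<integral>y. indicator B y * G w (snd y) \<partial>\<mu>)"
proof -
  define B' where "B' = (\<lambda>s. (0::real, s)) -` B"
  have "B' \<in> sets borel"
  proof -
    have "B' = (\<lambda>s. (0::real, s)) -` B \<inter> space borel"
      by (simp add: B'_def)
    also have "\<dots> \<in> sets borel"
      using B by measurable
    finally show ?thesis .
  qed
  have B_eq: "y \<in> B \<longleftrightarrow> snd y \<in> B'" for y
    using det[of y "(0, snd y)"] det[of "(0, snd y)" y] by (auto simp: B'_def)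
  have "measure \<mu> {y \<in> B. w < fst y} = measure \<mu> {y \<in> space \<mu>. w < fst y \<and> snd y \<in> B'}"
    using B_eq by (metis (lifting) UNIV_I space_eq)
  also have "\<dots> = (\<integral>y. indicator B' (snd y) * G w (snd y) \<partial>\<mu>)"
    by (rule survival_eq) fact
  also have "\<dots> = (\<integral>y. indicator B y * G w (snd y) \<partial>\<mu>)"
    using B_eq by (simp add: indicator_def)
  finally show ?thesis .
qed

lemma integrable_G_fst: "integrable (\<mu> \<Otimes>\<^sub>M \<mu>) (\<lambda>p. G w (snd (fst p)))"
proof -
  have "integrable (distr (\<mu> \<Otimes>\<^sub>M \<mu>) \<mu> fst) (\<lambda>y. G w (snd y))"
    using integrable_G[of w] by (simp add: distr_pair_fst)
  then show ?thesis
    by (subst (asm) integrable_distr_eq) auto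
qed

lemma integrable_G_snd: "integrable (\<mu> \<Otimes>\<^sub>M \<mu>) (\<lambda>p. G w (snd (snd p)))"
proof -
  interpret P: pair_prob_space \<mu> \<mu> ..
  show ?thesis
    using P.integrable_product_swap[OF integrable_G_fst[of w]] by (simp add: case_prod_unfold)
qed

lemma measure_pair_survival_fst:
  assumes H: "H \<in> sets (\<mu> \<Otimes>\<^sub>M \<mu>)"
    and det: "\<And>t t' u. snd t = snd t' \<Longrightarrow> (t, u) \<in> H \<Longrightarrow> (t', u) \<in> H"
  shows "measure (\<mu> \<Otimes>\<^sub>M \<mu>) {p \<in> H. w < fst (fst p)}
    = (\<integral>p. indicator H p * G w (snd (fst p)) \<partial>(\<mu> \<Otimes>\<^sub>M \<mu>))"
proof -
  interpret P: pair_prob_space \<mu> \<mu> ..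
  let ?X = "{p \<in> H. w < fst (fst p)}"
  have X: "?X \<in> sets (\<mu> \<Otimes>\<^sub>M \<mu>)"
    using H by measurable
  have slice: "(\<integral>t. indicator ?X (t, u) \<partial>\<mu> :: real) = (\<integral>t. indicator H (t, u) * G w (snd t) \<partial>\<mu>)" for u
  proof -
    have "(\<lambda>t. (t, u)) -` H \<in> sets \<mu>"
      using H by (rule sets_Pair2)
    then have "measure \<mu> {t \<in> (\<lambda>t. (t, u)) -` H. w < fst t}
        = (\<integral>t. indicator ((\<lambda>t. (t, u)) -` H) t * G w (snd t) \<partial>\<mu>)"
      by (rule survival_eq_score_determined) (use det in blast)
    moreover have "(\<integral>t. indicator ?X (t, u) \<partial>\<mu>) = (\<integral>t. indicator {t \<in> (\<lambda>t. (t, u)) -` H. w < fst t} t \<partial>\<mu> :: real)"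
      by (rule Bochner_Integration.integral_cong) (auto simp: indicator_def)
    ultimately show ?thesis
      by (simp add: indicator_vimage)
  qed
  have "measure (\<mu> \<Otimes>\<^sub>M \<mu>) ?X = (\<integral>u. \<integral>t. indicator ?X (t, u) \<partial>\<mu> \<partial>\<mu>)"
    using P.integral_snd[of "\<lambda>t u. indicator ?X (t, u) :: real"] integrable_real_indicator[OF X]
    by (simp add: case_prod_beta' P.emeasure_eq_measure space_pair_measure)
  also have "\<dots> = (\<integral>u. \<integral>t. indicator H (t, u) * G w (snd t) \<partial>\<mu> \<partial>\<mu>)"
    by (simp only: slice)
  also have "\<dots> = (\<integral>p. indicator H p * G w (snd (fst p)) \<partial>(\<mu> \<Otimes>\<^sub>M \<mu>))"
    using P.integral_snd[of "\<lambda>t u. indicator H (t, u) * G w (snd t)"]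
      integrable_real_mult_indicator[OF H integrable_G_fst]
    by (simp add: case_prod_beta' mult.commute)
  finally show ?thesis .
qed

lemma measure_pair_survival_snd:
  assumes H: "H \<in> sets (\<mu> \<Otimes>\<^sub>M \<mu>)"
    and det: "\<And>t u u'. snd u = snd u' \<Longrightarrow> (t, u) \<in> H \<Longrightarrow> (t, u') \<in> H"
  shows "measure (\<mu> \<Otimes>\<^sub>M \<mu>) {p \<in> H. w < fst (snd p)}
    = (\<integral>p. indicator H p * G w (snd (snd p)) \<partial>(\<mu> \<Otimes>\<^sub>M \<mu>))"
proof -
  interpret P: pair_prob_space \<mu> \<mu> ..
  let ?X = "{p \<in> H. w < fst (snd p)}"
  have X: "?X \<in> sets (\<mu> \<Otimes>\<^sub>M \<mu>)"
    using H by measurable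
  have slice: "(\<integral>u. indicator ?X (t, u) \<partial>\<mu> :: real) = (\<integral>u. indicator H (t, u) * G w (snd u) \<partial>\<mu>)" for t
  proof -
    have "Pair t -` H \<in> sets \<mu>"
      using H by (rule sets_Pair1)
    then have "measure \<mu> {u \<in> Pair t -` H. w < fst u}
        = (\<integral>u. indicator (Pair t -` H) u * G w (snd u) \<partial>\<mu>)"
      by (rule survival_eq_score_determined) (use det in blast)
    moreover have "(\<integral>u. indicator ?X (t, u) \<partial>\<mu>) = (\<integral>u. indicator {u \<in> Pair t -` H. w < fst u} u \<partial>\<mu> :: real)"
      by (rule Bochner_Integration.integral_cong) (auto simp: indicator_def)
    ultimately show ?thesis
      by (simp add: indicator_vimage)
  qed
  have "measure (\<mu> \<Otimes>\<^sub>M \<mu>) ?X = (\<integral>t. \<integral>u. indicator ?X (t, u) \<partial>\<mu> \<partial>\<mu>)"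
    using P.integral_fst[of "\<lambda>t u. indicator ?X (t, u) :: real"] integrable_real_indicator[OF X]
    by (simp add: case_prod_beta' P.emeasure_eq_measure space_pair_measure)
  also have "\<dots> = (\<integral>t. \<integral>u. indicator H (t, u) * G w (snd u) \<partial>\<mu> \<partial>\<mu>)"
    by (simp only: slice)
  also have "\<dots> = (\<integral>p. indicator H p * G w (snd (snd p)) \<partial>(\<mu> \<Otimes>\<^sub>M \<mu>))"
    using P.integral_fst[of "\<lambda>t u. indicator H (t, u) * G w (snd u)"]
      integrable_real_mult_indicator[OF H integrable_G_snd]
    by (simp add: case_prod_beta' mult.commute)
  finally show ?thesis .
qed

lemma measure_pair_survival_le:
  assumes H: "H \<in> sets (\<mu> \<Otimes>\<^sub>M \<mu>)"
    and det: "\<And>t t' u u'. snd t = snd t' \<Longrightarrow> snd u = snd u' \<Longrightarrow> (t, u) \<in> H \<Longrightarrow> (t', u') \<in> H"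
    and ord: "\<And>t u. (t, u) \<in> H \<Longrightarrow> snd u \<le> snd t"
  shows "measure (\<mu> \<Otimes>\<^sub>M \<mu>) {p \<in> H. w < fst (snd p)} \<le> measure (\<mu> \<Otimes>\<^sub>M \<mu>) {p \<in> H. w < fst (fst p)}"
proof -
  have "(\<integral>p. indicator H p * G w (snd (snd p)) \<partial>(\<mu> \<Otimes>\<^sub>M \<mu>))
      \<le> (\<integral>p. indicator H p * G w (snd (fst p)) \<partial>(\<mu> \<Otimes>\<^sub>M \<mu>))"
  proof (rule integral_mono)
    show "integrable (\<mu> \<Otimes>\<^sub>M \<mu>) (\<lambda>p. indicator H p * G w (snd (snd p)))"
      "integrable (\<mu> \<Otimes>\<^sub>M \<mu>) (\<lambda>p. indicator H p * G w (snd (fst p)))"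
      using integrable_real_mult_indicator[OF H integrable_G_snd]
        integrable_real_mult_indicator[OF H integrable_G_fst] by (simp_all add: mult.commute)
    fix p
    show "indicator H p * G w (snd (snd p)) \<le> indicator H p * G w (snd (fst p))"
      using ord[of "fst p" "snd p"] mono_G[of w] by (auto simp: indicator_def mono_def)
  qed
  then show ?thesis
    using det by (simp add: measure_pair_survival_fst[OF H] measure_pair_survival_snd[OF H])
qed

end

section \<open>Exchanging individuals in an i.i.d. sample\<close>

lemma measurable_fun_upd2:
  assumes "x \<in> space (PiM J M)"
  shows "(\<lambda>p. x(b := snd p, a := fst p)) \<in> measurable (M a \<Otimes>\<^sub>M M b) (PiM (insert a (insert b J)) M)"
  by (rule measurable_fun_upd[where J="insert b J"], simp,
      rule measurable_fun_upd[where J=J], use assms in auto)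

lemma (in product_sigma_finite) emeasure_PiM_insert_insert:
  assumes J: "finite J" "a \<notin> J" "b \<notin> J" and ab: "a \<noteq> b"
    and X: "X \<in> sets (PiM (insert a (insert b J)) M)"
  shows "emeasure (PiM (insert a (insert b J)) M) X
    = (\<integral>\<^sup>+x. emeasure (M a \<Otimes>\<^sub>M M b) ((\<lambda>p. x(b := snd p, a := fst p)) -` X \<inter> space (M a \<Otimes>\<^sub>M M b)) \<partial>PiM J M)"
proof -
  interpret P: pair_sigma_finite "M a" "M b" ..
  have "emeasure (PiM (insert a (insert b J)) M) X
      = (\<integral>\<^sup>+x. \<integral>\<^sup>+t. indicator X (x(a := t)) \<partial>M a \<partial>PiM (insert b J) M)"
    using J ab X by (simp add: product_nn_integral_insert[symmetric])
  also have "\<dots> = (\<integral>\<^sup>+x. \<integral>\<^sup>+u. \<integral>\<^sup>+t. indicator X (x(b := u, a := t)) \<partial>M a \<partial>M b \<partial>PiM J M)"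
  proof (rule product_nn_integral_insert[OF J(1,3)])
    have "(\<lambda>(y, t). indicator X (y(a := t)) :: ennreal) \<in> borel_measurable (PiM (insert b J) M \<Otimes>\<^sub>M M a)"
      using measurable_comp[OF measurable_add_dim borel_measurable_indicator[OF X]]
      by (simp add: comp_def case_prod_beta')
    then show "(\<lambda>y. \<integral>\<^sup>+t. indicator X (y(a := t)) \<partial>M a) \<in> borel_measurable (PiM (insert b J) M)"
      by (rule sigma_finite_measure.borel_measurable_nn_integral[OF sigma_finite_measures, simplified])
  qed
  also have "\<dots> = (\<integral>\<^sup>+x. emeasure (M a \<Otimes>\<^sub>M M b) ((\<lambda>p. x(b := snd p, a := fst p)) -` X \<inter> space (M a \<Otimes>\<^sub>M M b)) \<partial>PiM J M)"
  proof (rule nn_integral_cong)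
    fix x assume "x \<in> space (PiM J M)"
    define S where "S = (\<lambda>p. x(b := snd p, a := fst p)) -` X \<inter> space (M a \<Otimes>\<^sub>M M b)"
    have S: "S \<in> sets (M a \<Otimes>\<^sub>M M b)"
      unfolding S_def using \<open>x \<in> space (PiM J M)\<close> X by (intro measurable_sets[OF measurable_fun_upd2])
    have "(\<integral>\<^sup>+u. \<integral>\<^sup>+t. indicator X (x(b := u, a := t)) \<partial>M a \<partial>M b) = (\<integral>\<^sup>+u. \<integral>\<^sup>+t. indicator S (t, u) \<partial>M a \<partial>M b)"
      by (intro nn_integral_cong) (auto simp: S_def indicator_def space_pair_measure)
    also have "\<dots> = emeasure (M a \<Otimes>\<^sub>M M b) S"
      using P.nn_integral_snd[of "indicator S"] S by simp
    finally show "(\<integral>\<^sup>+u. \<integral>\<^sup>+t. indicator X (x(b := u, a := t)) \<partial>M a \<partial>M b)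
        = emeasure (M a \<Otimes>\<^sub>M M b) ((\<lambda>p. x(b := snd p, a := fst p)) -` X \<inter> space (M a \<Otimes>\<^sub>M M b))"
      by (simp add: S_def)
  qed
  finally show ?thesis .
qed

definition score_determined :: "'i set \<Rightarrow> ('i \<Rightarrow> 'v \<times> 's) set \<Rightarrow> bool" where
  "score_determined I A \<longleftrightarrow>
    (\<forall>x\<in>A. \<forall>y\<in>PiE I (\<lambda>_. UNIV). (\<forall>l\<in>I. snd (y l) = snd (x l)) \<longrightarrow> y \<in> A)"

context risk_score_law
begin

abbreviation sample :: "nat set \<Rightarrow> (nat \<Rightarrow> real \<times> real) measure" where
  "sample I \<equiv> PiM I (\<lambda>_. \<mu>)"

lemma space_sample: "space (sample I) = PiE I (\<lambda>_. UNIV)"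
  by (simp add: space_PiM)

lemma prob_space_sample: "prob_space (sample I)"
  by (rule prob_space_PiM) (rule prob_space)

lemma product_sigma_finite_sample: "product_sigma_finite (\<lambda>_::nat. \<mu>)"
  by (auto simp: product_sigma_finite_def intro: sigma_finite_measure_axioms)

lemma measurable_fst_component:
  "l \<in> I \<Longrightarrow> (\<lambda>x. fst (x l)) \<in> borel_measurable (sample I)"
  by (rule measurable_compose[OF measurable_component_singleton]) measurable

lemma sets_sum_fst_gt:
  assumes "D \<subseteq> I"
  shows "{x \<in> space (sample I). c < (\<Sum>l\<in>D. fst (x l))} \<in> sets (sample I)"
proof -
  have "(\<lambda>x. \<Sum>l\<in>D. fst (x l)) \<in> borel_measurable (sample I)"
    using assms by (intro borel_measurable_sum measurable_fst_component) auto
  then show ?thesis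
    by measurable
qed

lemma measure_swap_slice_le:
  assumes J: "a \<notin> J" "b \<notin> J" "a \<noteq> b" and x: "x \<in> space (sample J)"
    and A: "A \<in> sets (sample (insert a (insert b J)))" "score_determined (insert a (insert b J)) A"
    and ord: "\<And>x. x \<in> A \<Longrightarrow> snd (x b) \<le> snd (x a)"
  shows "measure (\<mu> \<Otimes>\<^sub>M \<mu>) {p \<in> (\<lambda>p. x(b := snd p, a := fst p)) -` A. w < fst (snd p)}
    \<le> measure (\<mu> \<Otimes>\<^sub>M \<mu>) {p \<in> (\<lambda>p. x(b := snd p, a := fst p)) -` A. w < fst (fst p)}"
proof -
  let ?emb = "\<lambda>p. x(b := snd p, a := fst p)"
  have emb: "?emb \<in> measurable (\<mu> \<Otimes>\<^sub>M \<mu>) (sample (insert a (insert b J)))"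
    using x by (rule measurable_fun_upd2)
  show ?thesis
  proof (rule measure_pair_survival_le)
    show "?emb -` A \<in> sets (\<mu> \<Otimes>\<^sub>M \<mu>)"
      using measurable_sets[OF emb A(1)] by (simp add: space_pair_measure)
  next
    fix t t' u u' :: "real \<times> real"
    assume "snd t = snd t'" "snd u = snd u'" "(t, u) \<in> ?emb -` A"
    moreover have "?emb (t', u') \<in> PiE (insert a (insert b J)) (\<lambda>_. UNIV)"
      using measurable_space[OF emb, of "(t', u')"] by (simp add: space_pair_measure space_sample)
    ultimately show "(t', u') \<in> ?emb -` A"
      using A(2) unfolding score_determined_def by auto
  next
    fix t u assume "(t, u) \<in> ?emb -` A"
    then show "snd u \<le> snd t"
      using ord[of "?emb (t, u)"] J(3) by auto
  qed
qed

lemma measure_swap_component_le: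
  assumes I: "finite I" "a \<in> I" "b \<in> I" "a \<noteq> b" and R: "R \<subseteq> I - {a, b}"
    and A: "A \<in> sets (sample I)" "score_determined I A"
    and ord: "\<And>x. x \<in> A \<Longrightarrow> snd (x b) \<le> snd (x a)"
  shows "measure (sample I) {x \<in> A. c < fst (x b) + (\<Sum>l\<in>R. fst (x l))}
    \<le> measure (sample I) {x \<in> A. c < fst (x a) + (\<Sum>l\<in>R. fst (x l))}"
proof -
  interpret S: prob_space "sample I"
    by (rule prob_space_sample)
  interpret product_sigma_finite "\<lambda>_::nat. \<mu>"
    by (rule product_sigma_finite_sample)
  interpret P: pair_prob_space \<mu> \<mu> ..
  define J where "J = I - {a, b}"
  have I_eq: "I = insert a (insert b J)" and J: "finite J" "a \<notin> J" "b \<notin> J" "R \<subseteq> J"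
    using I R by (auto simp: J_def)
  define E where "E e = {x \<in> A. c < fst (x e) + (\<Sum>l\<in>R. fst (x l))}" for e
  have E: "E e \<in> sets (sample I)" if "e \<in> {a, b}" for e
  proof -
    have "finite R" "e \<notin> R"
      using J that finite_subset by auto
    then have "E e = A \<inter> {x \<in> space (sample I). c < (\<Sum>l\<in>insert e R. fst (x l))}"
      using sets.sets_into_space[OF A(1)] by (auto simp: E_def)
    then show ?thesis
      using A(1) R that I by (auto intro!: sets_sum_fst_gt)
  qed
  have "emeasure (\<mu> \<Otimes>\<^sub>M \<mu>) ((\<lambda>p. x(b := snd p, a := fst p)) -` E b \<inter> space (\<mu> \<Otimes>\<^sub>M \<mu>))
      \<le> emeasure (\<mu> \<Otimes>\<^sub>M \<mu>) ((\<lambda>p. x(b := snd p, a := fst p)) -` E a \<inter> space (\<mu> \<Otimes>\<^sub>M \<mu>))"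
    if x: "x \<in> space (sample J)" for x
  proof -
    let ?emb = "\<lambda>p. x(b := snd p, a := fst p)"
    have sum_R: "(\<Sum>l\<in>R. fst (?emb p l)) = (\<Sum>l\<in>R. fst (x l))" for p
      using J by (intro sum.cong) auto
    have emb_ab: "?emb p a = fst p" "?emb p b = snd p" for p
      using I(4) by auto
    have "?emb -` E b = {p \<in> ?emb -` A. c - (\<Sum>l\<in>R. fst (x l)) < fst (snd p)}"
      "?emb -` E a = {p \<in> ?emb -` A. c - (\<Sum>l\<in>R. fst (x l)) < fst (fst p)}"
      unfolding E_def by (auto simp del: fun_upd_apply simp add: sum_R emb_ab)
    then show ?thesis
      using measure_swap_slice_le[OF J(2,3) I(4) x, of A] A ord unfolding I_eq
      by (simp add: P.emeasure_eq_measure space_pair_measure)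
  qed
  then have "emeasure (sample I) (E b) \<le> emeasure (sample I) (E a)"
    using E unfolding I_eq
    by (simp add: emeasure_PiM_insert_insert[OF J(1-3) I(4)] nn_integral_mono)
  then show ?thesis
    by (simp add: S.emeasure_eq_measure E_def)
qed

lemma measure_sum_exchange_le:
  assumes I: "finite I" and A: "A \<in> sets (sample I)" "score_determined I A"
    and L: "L \<subseteq> I" and D: "D \<subseteq> I" and card: "card L = card D"
    and ord: "\<And>x d l. x \<in> A \<Longrightarrow> d \<in> D - L \<Longrightarrow> l \<in> L - D \<Longrightarrow> snd (x d) \<le> snd (x l)"
  shows "measure (sample I) {x \<in> A. c < (\<Sum>l\<in>D. fst (x l))}
    \<le> measure (sample I) {x \<in> A. c < (\<Sum>l\<in>L. fst (x l))}"
  using L card ord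
proof (induction "card (L - D)" arbitrary: L rule: less_induct)
  case (less L)
  have fin: "finite L" "finite D"
    using less.prems(1) D I finite_subset by auto
  show ?case
  proof (cases "L - D = {}")
    case True
    then have "L = D"
      using fin less.prems(2) by (metis Diff_eq_empty_iff card_subset_eq)
    then show ?thesis by simp
  next
    case False
    then obtain a where a: "a \<in> L" "a \<notin> D" by auto
    have "card (D - L) = card (L - D)"
      using fin less.prems(2) by (simp add: card_Diff_subset_Int Int_commute)
    moreover have "card (L - D) > 0"
      using False fin by (simp add: card_gt_0_iff)
    ultimately have "D - L \<noteq> {}"
      by (metis card.empty less_irrefl)
    then obtain b where b: "b \<in> D" "b \<notin> L" by auto
    define L' where "L' = insert b (L - {a})"
    have "card (L' - D) < card (L - D)"
    proof -
      have "L' - D = (L - D) - {a}"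
        using a b by (auto simp: L'_def)
      then show ?thesis
        using card_Diff1_less[of "L - D" a] a fin by simp
    qed
    moreover have "L' \<subseteq> I" "card L' = card D"
    proof -
      have "card L > 0"
        using a fin(1) card_gt_0_iff by blast
      then show "L' \<subseteq> I" "card L' = card D"
        using less.prems(1,2) a b fin D by (auto simp: L'_def card_insert_if)
    qed
    moreover have "snd (x d) \<le> snd (x l)" if "x \<in> A" "d \<in> D - L'" "l \<in> L' - D" for x d l
      using less.prems(3)[of x d l] that a b by (auto simp: L'_def)
    ultimately have "measure (sample I) {x \<in> A. c < (\<Sum>l\<in>D. fst (x l))}
        \<le> measure (sample I) {x \<in> A. c < (\<Sum>l\<in>L'. fst (x l))}"
      by (rule less.hyps)
    also have "\<dots> = measure (sample I) {x \<in> A. c < fst (x b) + (\<Sum>l\<in>L - {a}. fst (x l))}"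
      using fin b by (simp add: L'_def)
    also have "\<dots> \<le> measure (sample I) {x \<in> A. c < fst (x a) + (\<Sum>l\<in>L - {a}. fst (x l))}"
      using I a b less.prems(1) D A less.prems(3)
      by (intro measure_swap_component_le) auto
    also have "\<dots> = measure (sample I) {x \<in> A. c < (\<Sum>l\<in>L. fst (x l))}"
      using fin a by (simp add: sum.remove)
    finally show ?thesis .
  qed
qed

abbreviation lower_ranked_event :: "nat set \<Rightarrow> nat \<Rightarrow> nat set \<Rightarrow> (nat \<Rightarrow> real \<times> real) set" where
  "lower_ranked_event I j D \<equiv> {x \<in> space (sample I). lower_ranked I (\<lambda>m. snd (x m)) j = D}"

lemma measurable_snd_component:
  "l \<in> I \<Longrightarrow> (\<lambda>x. snd (x l)) \<in> borel_measurable (sample I)"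
  by (rule measurable_compose[OF measurable_component_singleton]) measurable

lemma sets_lower_ranked_event:
  "D \<subseteq> I \<Longrightarrow> lower_ranked_event I j D \<in> sets (sample I)"
  by (rule sets_lower_ranked_eq) (auto intro: measurable_snd_component)

lemma measure_lower_ranked_event_le:
  assumes I: "finite I" and L: "L \<subseteq> I" "card L = card {j..card I}" and j: "1 \<le> j" and D: "D \<subseteq> I"
  shows "measure (sample I) {x \<in> lower_ranked_event I j D. c < (\<Sum>l\<in>D. fst (x l))}
    \<le> measure (sample I) {x \<in> lower_ranked_event I j D. c < (\<Sum>l\<in>L. fst (x l))}"
proof (cases "lower_ranked_event I j D = {}")
  case False
  then obtain x where "x \<in> lower_ranked_event I j D" by blast
  then have "D = lower_ranked I (\<lambda>m. snd (x m)) j"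
    by simp
  then have "card L = card D"
    using card_lower_ranked[OF I j, of "\<lambda>m. snd (x m)"] L by simp
  moreover have "score_determined I (lower_ranked_event I j D)"
  proof (unfold score_determined_def, intro ballI impI)
    fix x y :: "nat \<Rightarrow> real \<times> real"
    assume "x \<in> lower_ranked_event I j D" "y \<in> PiE I (\<lambda>_. UNIV)" "\<forall>l\<in>I. snd (y l) = snd (x l)"
    then show "y \<in> lower_ranked_event I j D"
      using lower_ranked_cong[of I "\<lambda>m. snd (y m)" "\<lambda>m. snd (x m)" j] by (auto simp: space_sample)
  qed
  moreover have "snd (x d) \<le> snd (x l)"
    if "x \<in> lower_ranked_event I j D" "d \<in> D - L" "l \<in> L - D" for x d l
    using that L by (intro rank_desc_less_imp_score_le[OF I]) (auto simp: lower_ranked_def)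
  ultimately show ?thesis
    using D by (intro measure_sum_exchange_le[OF I sets_lower_ranked_event _ L(1)]) auto
next
  case True
  then have "{x \<in> lower_ranked_event I j D. P x} = {}" for P
    by blast
  then show ?thesis
    by (simp only:)
qed

lemma measure_lower_ranked_sum_le:
  assumes I: "finite I" and L: "L \<subseteq> I" "card L = card {j..card I}" and j: "1 \<le> j"
  shows "measure (sample I) {x \<in> space (sample I). c < (\<Sum>l\<in>lower_ranked I (\<lambda>m. snd (x m)) j. fst (x l))}
    \<le> measure (sample I) {x \<in> space (sample I). c < (\<Sum>l\<in>L. fst (x l))}"
proof -
  interpret S: prob_space "sample I"
    by (rule prob_space_sample)
  have sets: "{x \<in> lower_ranked_event I j D. c < (\<Sum>l\<in>E. fst (x l))} \<in> sets (sample I)"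
    if "D \<subseteq> I" "E \<subseteq> I" for D E
  proof -
    have "{x \<in> lower_ranked_event I j D. c < (\<Sum>l\<in>E. fst (x l))}
        = lower_ranked_event I j D \<inter> {x \<in> space (sample I). c < (\<Sum>l\<in>E. fst (x l))}"
      by auto
    then show ?thesis
      using sets_lower_ranked_event sets_sum_fst_gt that by auto
  qed
  have measure_UN: "measure (sample I) (\<Union>D\<in>Pow I. {x \<in> lower_ranked_event I j D. P D x})
      = (\<Sum>D\<in>Pow I. measure (sample I) {x \<in> lower_ranked_event I j D. P D x})"
    if "\<And>D. D \<subseteq> I \<Longrightarrow> {x \<in> lower_ranked_event I j D. P D x} \<in> sets (sample I)" for P
    using I that by (intro S.finite_measure_finite_Union) (auto simp: disjoint_family_on_def)
  have "measure (sample I) {x \<in> space (sample I). c < (\<Sum>l\<in>lower_ranked I (\<lambda>m. snd (x m)) j. fst (x l))}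
      = measure (sample I) (\<Union>D\<in>Pow I. {x \<in> lower_ranked_event I j D. c < (\<Sum>l\<in>D. fst (x l))})"
    using lower_ranked_subset[of I] by (intro arg_cong[where f="measure _"]) blast
  also have "\<dots> = (\<Sum>D\<in>Pow I. measure (sample I) {x \<in> lower_ranked_event I j D. c < (\<Sum>l\<in>D. fst (x l))})"
    using sets by (intro measure_UN) auto
  also have "\<dots> \<le> (\<Sum>D\<in>Pow I. measure (sample I) {x \<in> lower_ranked_event I j D. c < (\<Sum>l\<in>L. fst (x l))})"
    using assms by (intro sum_mono measure_lower_ranked_event_le) auto
  also have "\<dots> = measure (sample I) (\<Union>D\<in>Pow I. {x \<in> lower_ranked_event I j D. c < (\<Sum>l\<in>L. fst (x l))})"
    using sets L(1) by (intro measure_UN[symmetric]) auto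
  also have "\<dots> = measure (sample I) {x \<in> space (sample I). c < (\<Sum>l\<in>L. fst (x l))}"
    using lower_ranked_subset[of I] by (intro arg_cong[where f="measure _"]) blast
  finally show ?thesis .
qed

end

section \<open>Testing efficiencies\<close>

lemma (in prob_space) distr_indep_identical_eq_PiM:
  assumes "I \<noteq> {}" and X: "\<And>i. i \<in> I \<Longrightarrow> random_variable N (X i)"
    and "indep_vars (\<lambda>_. N) X I" and "\<And>i. i \<in> I \<Longrightarrow> distr M N (X i) = \<mu>"
  shows "distr M (PiM I (\<lambda>_. N)) (\<lambda>\<omega>. \<lambda>i\<in>I. X i \<omega>) = PiM I (\<lambda>_. \<mu>)"
  using indep_vars_iff_distr_eq_PiM'[OF assms(1) X] assms(3,4) by (simp cong: PiM_cong)

lemma (in prob_space) cdf_distr: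
  "T \<in> borel_measurable M \<Longrightarrow> cdf (distr M borel T) c = measure M {\<omega> \<in> space M. T \<omega> \<le> c}"
  unfolding cdf_def by (subst measure_distr) (auto simp: vimage_def Int_def conj_commute)

lemma (in prob_space) prob_le_eq_1_minus_prob_gt:
  fixes f :: "'a \<Rightarrow> real"
  assumes "{\<omega> \<in> space M. c < f \<omega>} \<in> events"
  shows "prob {\<omega> \<in> space M. f \<omega> \<le> c} = 1 - prob {\<omega> \<in> space M. c < f \<omega>}"
proof -
  have "{\<omega> \<in> space M. f \<omega> \<le> c} = space M - {\<omega> \<in> space M. c < f \<omega>}"
    by auto
  then show ?thesis
    using prob_compl[OF assms] by simp
qed

text \<open>The risk-score condition only concerns thresholds \<open>v \<ge> 0\<close>. Below 0 the survival function
  of the nonnegative value is identically 1; such thresholds do occur in the exchange argument,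
  where the values of the other individuals are subtracted from the cutoff.\<close>

lemma risk_score_law_distr:
  assumes "prob_space M"
    and V: "V \<in> borel_measurable M" and S: "S \<in> borel_measurable M"
    and nonneg: "\<And>\<omega>. \<omega> \<in> space M \<Longrightarrow> 0 \<le> V \<omega>"
    and g: "\<And>v. 0 \<le> v \<Longrightarrow> mono (g v) \<and> g v \<in> borel_measurable borel"
    and integrable_g: "\<And>v. 0 \<le> v \<Longrightarrow> integrable M (\<lambda>\<omega>. g v (S \<omega>))"
    and survival_g: "\<And>v A. 0 \<le> v \<Longrightarrow> A \<in> sets borel \<Longrightarrow>
      measure M {\<omega> \<in> space M. v < V \<omega> \<and> S \<omega> \<in> A} = (\<integral>\<omega>. indicator A (S \<omega>) * g v (S \<omega>) \<partial>M)"
  shows "risk_score_law (distr M (borel \<Otimes>\<^sub>M borel) (\<lambda>\<omega>. (V \<omega>, S \<omega>))) (\<lambda>v s. if v < 0 then 1 else g v s)"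
proof (rule risk_score_law.intro)
  interpret prob_space M by fact
  have VS[measurable]: "(\<lambda>\<omega>. (V \<omega>, S \<omega>)) \<in> measurable M (borel \<Otimes>\<^sub>M borel)"
    using V S by measurable
  let ?\<mu> = "distr M (borel \<Otimes>\<^sub>M borel) (\<lambda>\<omega>. (V \<omega>, S \<omega>))"
  let ?G = "\<lambda>v s. if v < 0 then 1 else g v s"
  show "prob_space ?\<mu>"
    by (rule prob_space_distr) measurable
  show "sets ?\<mu> = sets (borel \<Otimes>\<^sub>M borel)"
    by simp
  fix v :: real
  show "mono (?G v)"
    using g[of v] by (auto simp: mono_def)
  show G: "?G v \<in> borel_measurable borel"
    using g[of v] by (cases "v < 0") auto
  have [measurable]: "(\<lambda>y. ?G v (snd y)) \<in> borel_measurable (borel \<Otimes>\<^sub>M borel)"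
    using measurable_comp[OF measurable_snd G] by (simp add: comp_def)
  have "integrable M (\<lambda>\<omega>. ?G v (S \<omega>))"
    by (cases "v < 0") (simp_all add: integrable_g)
  then show "integrable ?\<mu> (\<lambda>y. ?G v (snd y))"
    by (subst integrable_distr_eq) (simp_all only: snd_conv, measurable)
  fix A :: "real set" assume A[measurable]: "A \<in> sets borel"
  have "{y \<in> space (borel \<Otimes>\<^sub>M borel). v < fst y \<and> snd y \<in> A} \<in> sets (borel \<Otimes>\<^sub>M borel)"
    by measurable
  then have "measure ?\<mu> {y \<in> space ?\<mu>. v < fst y \<and> snd y \<in> A} = measure M {\<omega> \<in> space M. v < V \<omega> \<and> S \<omega> \<in> A}"
    by (subst measure_distr) (auto simp: space_pair_measure vimage_def Int_def conj_commute)
  also have "\<dots> = (\<integral>\<omega>. indicator A (S \<omega>) * ?G v (S \<omega>) \<partial>M)"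
  proof (cases "v < 0")
    case True
    then have "{\<omega> \<in> space M. v < V \<omega> \<and> S \<omega> \<in> A} = S -` A \<inter> space M"
      using nonneg by force
    moreover have "(\<integral>\<omega>. indicator A (S \<omega>) * ?G v (S \<omega>) \<partial>M) = (\<integral>\<omega>. indicator (S -` A) \<omega> \<partial>M)"
      using True by (simp add: indicator_def)
    ultimately show ?thesis
      by simp
  qed (simp add: survival_g)
  also have "\<dots> = (\<integral>y. indicator A (snd y) * ?G v (snd y) \<partial>?\<mu>)"
    by (subst integral_distr) (simp_all only: snd_conv, measurable)
  finally show "measure ?\<mu> {y \<in> space ?\<mu>. v < fst y \<and> snd y \<in> A} = (\<integral>y. indicator A (snd y) * ?G v (snd y) \<partial>?\<mu>)" .
qed

context risk_score_law
begin

lemma distr_restrict_pairs_eq_sample: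
  assumes "prob_space M" and "I \<noteq> {}"
    and VS: "\<And>l. l \<in> I \<Longrightarrow> (\<lambda>\<omega>. (V l \<omega>, S l \<omega>)) \<in> measurable M (borel \<Otimes>\<^sub>M borel)"
    and "prob_space.indep_vars M (\<lambda>_. borel \<Otimes>\<^sub>M borel) (\<lambda>l \<omega>. (V l \<omega>, S l \<omega>)) I"
    and "\<And>l. l \<in> I \<Longrightarrow> distr M (borel \<Otimes>\<^sub>M borel) (\<lambda>\<omega>. (V l \<omega>, S l \<omega>)) = \<mu>"
  shows "distr M (sample I) (\<lambda>\<omega>. \<lambda>l\<in>I. (V l \<omega>, S l \<omega>)) = sample I"
proof -
  have "distr M (PiM I (\<lambda>_. borel \<Otimes>\<^sub>M borel)) (\<lambda>\<omega>. \<lambda>l\<in>I. (V l \<omega>, S l \<omega>)) = sample I"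
    using assms by (intro prob_space.distr_indep_identical_eq_PiM) auto
  moreover have "sets (sample I) = sets (PiM I (\<lambda>_. borel \<Otimes>\<^sub>M borel))"
    by (intro sets_PiM_cong) (simp_all add: sets_eq)
  then have "distr M (sample I) (\<lambda>\<omega>. \<lambda>l\<in>I. (V l \<omega>, S l \<omega>))
      = distr M (PiM I (\<lambda>_. borel \<Otimes>\<^sub>M borel)) (\<lambda>\<omega>. \<lambda>l\<in>I. (V l \<omega>, S l \<omega>))"
    by (rule distr_cong[OF refl]) simp
  ultimately show ?thesis
    by simp
qed

lemma vimage_lower_ranked_sum_gt:
  "(\<lambda>\<omega>. \<lambda>l\<in>{1..K}. (V l \<omega>, S l \<omega>)) -`
      {x \<in> space (sample {1..K}). c < (\<Sum>l\<in>lower_ranked {1..K} (\<lambda>m. snd (x m)) j. fst (x l))}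
    = {\<omega>. c < Tord K V S j \<omega>}"
proof -
  have "(\<Sum>l\<in>lower_ranked {1..K} (\<lambda>m. snd ((\<lambda>l\<in>{1..K}. (V l \<omega>, S l \<omega>)) m)) j.
      fst ((\<lambda>l\<in>{1..K}. (V l \<omega>, S l \<omega>)) l)) = Tord K V S j \<omega>" for \<omega>
  proof -
    have "lower_ranked {1..K} (\<lambda>m. snd ((\<lambda>l\<in>{1..K}. (V l \<omega>, S l \<omega>)) m)) j = lower_ranked {1..K} (\<lambda>m. S m \<omega>) j"
      by (rule lower_ranked_cong) simp
    moreover have "fst ((\<lambda>l\<in>{1..K}. (V l \<omega>, S l \<omega>)) l) = V l \<omega>" if "l \<in> lower_ranked {1..K} (\<lambda>m. S m \<omega>) j" for l
      using lower_ranked_subset that by force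
    ultimately show ?thesis
      by (simp add: Tord_eq_sum_lower_ranked)
  qed
  then show ?thesis
    by (auto simp: space_sample)
qed

lemma vimage_sum_gt:
  "1 \<le> j \<Longrightarrow> (\<lambda>\<omega>. \<lambda>l\<in>{1..K}. (V l \<omega>, S l \<omega>)) -` {x \<in> space (sample {1..K}). c < (\<Sum>l\<in>{j..K}. fst (x l))}
    = {\<omega>. c < Tsum K V j \<omega>}"
  by (auto simp: space_sample Tsum_def)

lemma cdf_Tsum_le_prob_Tord:
  assumes "prob_space M" and j: "1 \<le> j" and K: "1 \<le> K"
    and V: "\<And>l. l \<in> {1..K} \<Longrightarrow> V l \<in> borel_measurable M"
    and S: "\<And>l. l \<in> {1..K} \<Longrightarrow> S l \<in> borel_measurable M"
    and indep: "prob_space.indep_vars M (\<lambda>_. borel \<Otimes>\<^sub>M borel) (\<lambda>l \<omega>. (V l \<omega>, S l \<omega>)) {1..K}"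
    and ident: "\<And>l. l \<in> {1..K} \<Longrightarrow> distr M (borel \<Otimes>\<^sub>M borel) (\<lambda>\<omega>. (V l \<omega>, S l \<omega>)) = \<mu>"
  shows "cdf (distr M borel (Tsum K V j)) C \<le> measure M {\<omega> \<in> space M. Tord K V S j \<omega> \<le> C}"
proof -
  interpret M: prob_space M by fact
  let ?X = "\<lambda>\<omega>. \<lambda>l\<in>{1..K}. (V l \<omega>, S l \<omega>)"
  let ?Y_ord = "{x \<in> space (sample {1..K}). C < (\<Sum>l\<in>lower_ranked {1..K} (\<lambda>m. snd (x m)) j. fst (x l))}"
  let ?Y_sum = "{x \<in> space (sample {1..K}). C < (\<Sum>l\<in>{j..K}. fst (x l))}"
  have VS: "(\<lambda>\<omega>. (V l \<omega>, S l \<omega>)) \<in> measurable M (borel \<Otimes>\<^sub>M borel)" if "l \<in> {1..K}" for l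
    using V[OF that] S[OF that] by simp
  then have X: "?X \<in> measurable M (sample {1..K})"
    by (auto intro!: measurable_restrict cong: measurable_cong_sets simp: sets_eq)
  have transfer: "measure M (?X -` Y \<inter> space M) = measure (sample {1..K}) Y" if "Y \<in> sets (sample {1..K})" for Y
    using measure_distr[OF X that] distr_restrict_pairs_eq_sample[OF assms(1) _ VS indep ident] K by simp
  have Y: "?Y_ord \<in> sets (sample {1..K})" "?Y_sum \<in> sets (sample {1..K})"
    using j by (auto intro!: sets_lower_ranked_sum_gt sets_sum_fst_gt measurable_fst_component measurable_snd_component)
  have vimage: "?X -` ?Y_ord \<inter> space M = {\<omega> \<in> space M. C < Tord K V S j \<omega>}"
    "?X -` ?Y_sum \<inter> space M = {\<omega> \<in> space M. C < Tsum K V j \<omega>}"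
    unfolding vimage_lower_ranked_sum_gt vimage_sum_gt[OF j] by blast+
  have "measure M {\<omega> \<in> space M. C < Tord K V S j \<omega>} = measure (sample {1..K}) ?Y_ord"
    using transfer[OF Y(1)] unfolding vimage(1) .
  also have "\<dots> \<le> measure (sample {1..K}) ?Y_sum"
    using j by (intro measure_lower_ranked_sum_le) auto
  also have "\<dots> = measure M {\<omega> \<in> space M. C < Tsum K V j \<omega>}"
    using transfer[OF Y(2)] unfolding vimage(2) ..
  finally have "measure M {\<omega> \<in> space M. C < Tord K V S j \<omega>} \<le> measure M {\<omega> \<in> space M. C < Tsum K V j \<omega>}" .
  moreover have "{\<omega> \<in> space M. C < Tord K V S j \<omega>} \<in> sets M"
    unfolding Tord_eq_sum_lower_ranked using V S by (intro sets_lower_ranked_sum_gt) auto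
  moreover have "Tsum K V j \<in> borel_measurable M"
    unfolding Tsum_def[abs_def] using V j by auto
  ultimately show ?thesis
    by (simp add: M.cdf_distr M.prob_le_eq_1_minus_prob_gt)
qed

end

lemma cdf_Tsum_ge:
  assumes "prob_space M" and j: "1 \<le> j"
    and V: "\<And>l. l \<in> {1..K} \<Longrightarrow> V l \<in> borel_measurable M"
    and nonneg: "\<And>l \<omega>. l \<in> {1..K} \<Longrightarrow> \<omega> \<in> space M \<Longrightarrow> 0 \<le> V l \<omega>"
  shows "1 - measure M {\<omega> \<in> space M. C < Tsum K V 1 \<omega>} \<le> cdf (distr M borel (Tsum K V j)) C"
proof -
  interpret prob_space M by fact
  have T: "Tsum K V i \<in> borel_measurable M" if "1 \<le> i" for i
    unfolding Tsum_def[abs_def] using V that by auto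
  have "Tsum K V j \<omega> \<le> Tsum K V 1 \<omega>" if "\<omega> \<in> space M" for \<omega>
    unfolding Tsum_def using j nonneg that by (intro sum_mono2) auto
  then have "measure M {\<omega> \<in> space M. Tsum K V 1 \<omega> \<le> C} \<le> measure M {\<omega> \<in> space M. Tsum K V j \<omega> \<le> C}"
    using T[OF j] by (intro finite_measure_mono) (fastforce, measurable)
  then show ?thesis
    using T[of 1] T[OF j] by (simp add: cdf_distr prob_le_eq_1_minus_prob_gt)
qed

lemma one_minus_mean_le:
  fixes F :: "nat \<Rightarrow> real"
  assumes K: "2 \<le> K" and p: "0 \<le> p" and F: "\<And>j. j \<in> {1..K - 1} \<Longrightarrow> 1 - p \<le> F j"
  shows "1 - 1 / real K * (\<Sum>j = 1..K - 1. F j) \<le> 1 / real K + p"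
proof -
  have "real (K - 1) * (1 - p) \<le> (\<Sum>j = 1..K - 1. F j)"
    using sum_mono[of "{1..K - 1}" "\<lambda>_. 1 - p" F] F by simp
  then have "1 - 1 / real K * (\<Sum>j = 1..K - 1. F j) \<le> 1 - real (K - 1) * (1 - p) / real K"
    using K by (simp add: divide_right_mono)
  also have "\<dots> = 1 / real K + p - p / real K"
    using K by (simp add: of_nat_diff field_simps)
  also have "\<dots> \<le> 1 / real K + p"
    using K p by simp
  finally show ?thesis .
qed

theorem corollary2:
  fixes M :: "'a measure" and K :: nat and C :: real
    and V S :: "nat \<Rightarrow> 'a \<Rightarrow> real"
  assumes "prob_space M"
    and "C > 0" and "K \<ge> 2"
    and "\<And>j. j \<in> {1..K} \<Longrightarrow> V j \<in> borel_measurable M"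
    and "\<And>j. j \<in> {1..K} \<Longrightarrow> S j \<in> borel_measurable M"
    and "\<And>j \<omega>. j \<in> {1..K} \<Longrightarrow> \<omega> \<in> space M \<Longrightarrow> V j \<omega> \<ge> 0"
    and "prob_space.indep_vars M (\<lambda>_. borel \<Otimes>\<^sub>M borel) (\<lambda>j \<omega>. (V j \<omega>, S j \<omega>)) {1..K}"
    and "\<And>j. j \<in> {1..K} \<Longrightarrow>
           distr M (borel \<Otimes>\<^sub>M borel) (\<lambda>\<omega>. (V j \<omega>, S j \<omega>))
           = distr M (borel \<Otimes>\<^sub>M borel) (\<lambda>\<omega>. (V 1 \<omega>, S 1 \<omega>))"
    and "risk_score_condition M K V S"
  shows "phi_mMPA M K V S C \<le> phi_MPA M K V C
       \<and> phi_MPA M K V C \<le> min (phi_MP M K V C) phi_IND"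
proof -
  let ?F = "\<lambda>j. cdf (distr M borel (Tsum K V j)) C"
  have one: "1 \<in> {1..K}"
    using assms(3) by simp
  obtain g where g: "\<And>v. 0 \<le> v \<Longrightarrow> mono (g v) \<and> g v \<in> borel_measurable borel"
    and g1: "\<And>v. 0 \<le> v \<Longrightarrow> integrable M (\<lambda>\<omega>. g v (S 1 \<omega>))"
      "\<And>v A. 0 \<le> v \<Longrightarrow> A \<in> sets borel \<Longrightarrow> measure M {\<omega> \<in> space M. v < V 1 \<omega> \<and> S 1 \<omega> \<in> A}
         = (\<integral>\<omega>. indicator A (S 1 \<omega>) * g v (S 1 \<omega>) \<partial>M)"
    using assms(9) one unfolding risk_score_condition_def by blast
  note law = risk_score_law_distr[OF assms(1) assms(4,5)[OF one] assms(6)[OF one] g g1]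
  have F_le: "?F j \<le> measure M {\<omega> \<in> space M. Tord K V S j \<omega> \<le> C}" if "j \<in> {1..K - 1}" for j
    using that assms(3) by (intro risk_score_law.cdf_Tsum_le_prob_Tord[OF law assms(1) _ _ assms(4,5,7,8)]) auto
  have F_ge: "1 - measure M {\<omega> \<in> space M. C < Tsum K V 1 \<omega>} \<le> ?F j" if "j \<in> {1..K - 1}" for j
    using that by (intro cdf_Tsum_ge[OF assms(1) _ assms(4,6)]) auto
  have "0 \<le> ?F j" for j
    unfolding cdf_def by (rule measure_nonneg)
  then have "phi_MPA M K V C \<le> phi_IND"
    by (simp add: phi_MPA_def phi_IND_def sum_nonneg)
  moreover have "phi_MPA M K V C \<le> phi_MP M K V C"
    unfolding phi_MPA_def phi_MP_def using F_ge by (intro one_minus_mean_le[OF assms(3) measure_nonneg])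
  moreover have "(\<Sum>j = 1..K - 1. ?F j) \<le> (\<Sum>j = 1..K - 1. measure M {\<omega> \<in> space M. Tord K V S j \<omega> \<le> C})"
    using F_le by (intro sum_mono) auto
  then have "phi_mMPA M K V S C \<le> phi_MPA M K V C"
    by (simp add: phi_mMPA_def phi_MPA_def divide_right_mono)
  ultimately show ?thesis
    by simp
qed

end
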